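(* Let $(\mathcal Q,d)$ be a Hadamard space, $Y$ a $\mathcal Q$-valued random variable, $o\in\mathcal Q$, and $m\in\arg\min_{q\in\mathcal Q}\mathbb E[d(Y,q)-d(Y,o)]$. Let $\gamma:I\to\mathcal Q$ be a unit-speed geodesic on a closed interval $I$ with $0\in I$, $\gamma(0)=m$, and $\mathbb P(Y\in\gamma(I))=1$. Let $q\in\mathcal Q$. Then the projection $p:=\arg\min_{z\in\gamma(I)}d(q,z)$ exists and is unique; assume (after possibly reversing the orientation of $\gamma$) that $\gamma^{-1}(p)\ge0$. Define $a_-:=\mathbb P(\gamma^{-1}(Y)<0)$, $a_0:=\mathbb P(Y=m)$, $a_+:=\mathbb P(\gamma^{-1}(Y)>0)$. Then $$\mathbb E[d(Y,q)-d(Y,m)]\ \ge\ d(q,m)\,a_0+d(p,m)\,(a_--a_+)+\mathbb E\Big[\big(d(q,p)+d(p,m)-d(Y,m)\big)\mathbf 1_{(0,\,d(q,p)+d(p,m)]}\big(\gamma^{-1}(Y)\big)\Big].$$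
   Context: A Hadamard space is a complete metric space $(\mathcal Q,d)$ such that for all $y_0,y_1$ there is $m$ with $\frac12 d(y_0,q)^2+\frac12 d(y_1,q)^2-\frac14 d(y_0,y_1)^2\ge d(q,m)^2$ for all $q$. A unit-speed geodesic is a map $\gamma:I\to\mathcal Q$ on an interval with $d(\gamma(s),\gamma(t))=|s-t|$; it is injective, so $\gamma^{-1}$ is defined on its image. *)

theory Defs
  imports "HOL-Probability.Probability"
begin

definition hadamard_space :: "'a::metric_space set \<Rightarrow> bool" where
  "hadamard_space Q \<longleftrightarrow> Topological_Spaces.complete Q \<and>
     (\<forall>y0\<in>Q. \<forall>y1\<in>Q. \<exists>m\<in>Q. \<forall>q\<in>Q.
        (1/2) * (dist y0 q)\<^sup>2 + (1/2) * (dist y1 q)\<^sup>2 - (1/4) * (dist y0 y1)\<^sup>2 \<ge> (dist q m)\<^sup>2)"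

definition unit_speed_geodesic :: "real set \<Rightarrow> (real \<Rightarrow> 'a::metric_space) \<Rightarrow> bool" where
  "unit_speed_geodesic I \<gamma> \<longleftrightarrow> is_interval I \<and> (\<forall>s\<in>I. \<forall>t\<in>I. dist (\<gamma> s) (\<gamma> t) = \<bar>s - t\<bar>)"

end

theory Submission
  imports Defs
begin

text \<open>Along a unit-speed geodesic \<open>\<gamma>\<close> of a Hadamard space, \<open>t \<mapsto> d(q, \<gamma> t)\<^sup>2\<close> is 1-strongly
  midpoint convex. Iterating this towards a minimiser s gives the Pythagorean bound
  \<open>d(q, \<gamma> s)\<^sup>2 + (u - s)\<^sup>2 \<le> d(q, \<gamma> u)\<^sup>2\<close>, hence uniqueness of the projection \<open>p = \<gamma> s\<close> and
  \<open>max (d(q, p)) \<bar>u - s\<bar> \<le> d(q, \<gamma> u)\<close>. With \<open>Y = \<gamma> t\<close> these two bounds show, separately for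
  \<open>t < 0\<close>, \<open>t = 0\<close>, \<open>0 < t \<le> d(q, p) + d(p, m)\<close> and larger t, that \<open>d(Y, q) - d(Y, m)\<close> pointwise
  dominates the integrand of the right-hand side; taking expectations gives the inequality.\<close>

lemma is_interval_midpoint:
  assumes "is_interval (I::real set)" "a \<in> I" "b \<in> I"
  shows "(a + b) / 2 \<in> I"
proof (cases "a \<le> b")
  case True
  hence "a \<le> (a + b) / 2" "(a + b) / 2 \<le> b"
    by auto
  thus ?thesis
    using assms unfolding is_interval_1 by blast
next
  case False
  hence "b \<le> (a + b) / 2" "(a + b) / 2 \<le> a"
    by auto
  thus ?thesis
    using assms unfolding is_interval_1 by blast
qed

lemma unit_speed_geodesicD:
  "unit_speed_geodesic I \<gamma> \<Longrightarrow> s \<in> I \<Longrightarrow> t \<in> I \<Longrightarrow> dist (\<gamma> s) (\<gamma> t) = \<bar>s - t\<bar>"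
  unfolding unit_speed_geodesic_def by blast

lemma unit_speed_geodesic_inj_on: "unit_speed_geodesic I \<gamma> \<Longrightarrow> inj_on \<gamma> I"
  by (rule inj_onI) (metis unit_speed_geodesicD dist_self abs_0_eq right_minus_eq)

lemma unit_speed_geodesic_continuous_on: "unit_speed_geodesic I \<gamma> \<Longrightarrow> continuous_on I \<gamma>"
  unfolding continuous_on_iff
  by (metis unit_speed_geodesicD dist_real_def)

lemma continuous_on_inv_into_unit_speed_geodesic:
  assumes geod: "unit_speed_geodesic I \<gamma>"
  shows "continuous_on (\<gamma> ` I) (inv_into I \<gamma>)"
proof (clarsimp simp: continuous_on_iff)
  fix t e :: real assume "t \<in> I" "0 < e"
  thus "\<exists>d>0. \<forall>t'\<in>I. dist (\<gamma> t') (\<gamma> t) < d \<longrightarrow> dist (inv_into I \<gamma> (\<gamma> t')) (inv_into I \<gamma> (\<gamma> t)) < e"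
    using unit_speed_geodesicD[OF geod] inv_into_f_f[OF unit_speed_geodesic_inj_on[OF geod]]
    by (intro exI[of _ e]) (auto simp: dist_real_def)
qed

lemma borel_measurable_inv_into_unit_speed_geodesic:
  assumes geod: "unit_speed_geodesic I \<gamma>" and "closed I"
  shows "inv_into I \<gamma> \<in> borel_measurable borel"
proof -
  \<comment> \<open>the image is \<open>\<sigma>\<close>-compact, hence Borel\<close>
  have "\<gamma> ` I = (\<Union>n::nat. \<gamma> ` (I \<inter> {-real n..real n}))"
  proof (intro equalityI subsetI)
    fix x assume "x \<in> \<gamma> ` I"
    then obtain t where t: "t \<in> I" "x = \<gamma> t"
      by blast
    obtain n :: nat where "\<bar>t\<bar> \<le> real n"
      using real_arch_simple by blast
    hence "t \<in> I \<inter> {-real n..real n}"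
      using t by auto
    thus "x \<in> (\<Union>n::nat. \<gamma> ` (I \<inter> {-real n..real n}))"
      using t by blast
  qed auto
  moreover have "\<gamma> ` (I \<inter> {-real n..real n}) \<in> sets borel" for n :: nat
    using \<open>closed I\<close> continuous_on_subset[OF unit_speed_geodesic_continuous_on[OF geod]]
    by (intro borel_closed compact_imp_closed compact_continuous_image) auto
  ultimately have "\<gamma> ` I \<in> sets borel"
    by auto
  moreover have "continuous_on (- (\<gamma> ` I)) (inv_into I \<gamma>)"
  proof (rule continuous_on_eq[OF continuous_on_const])
    fix x assume "x \<in> - (\<gamma> ` I)"
    \<comment> \<open>off the image, \<open>inv_into\<close> is the junk value \<open>SOME y. False\<close>\<close>
    hence "(\<lambda>y. y \<in> I \<and> \<gamma> y = x) = (\<lambda>y. False)"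
      by auto
    thus "(SOME y::real. False) = inv_into I \<gamma> x"
      unfolding inv_into_def by simp
  qed
  ultimately show ?thesis
    using borel_measurable_continuous_on_if[of "\<gamma> ` I" "inv_into I \<gamma>" "inv_into I \<gamma>"]
      continuous_on_inv_into_unit_speed_geodesic[OF geod] by simp
qed

lemma borel_measurable_dist_right [measurable]:
  fixes f :: "'b \<Rightarrow> 'a::metric_space"
  assumes [measurable]: "f \<in> borel_measurable M"
  shows "(\<lambda>x. dist (f x) z) \<in> borel_measurable M"
proof -
  have [measurable]: "(\<lambda>y. dist y z) \<in> borel_measurable borel"
    by (intro borel_measurable_continuous_onI continuous_intros)
  show ?thesis
    by measurable
qed

lemma hadamard_dist_geodesic_midpoint_le:
  fixes \<gamma> :: "real \<Rightarrow> 'a::metric_space"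
  assumes had: "hadamard_space (UNIV :: 'a set)" and geod: "unit_speed_geodesic I \<gamma>"
    and a: "a \<in> I" and b: "b \<in> I"
  shows "(dist x (\<gamma> ((a + b) / 2)))\<^sup>2
    \<le> (1/2) * (dist (\<gamma> a) x)\<^sup>2 + (1/2) * (dist (\<gamma> b) x)\<^sup>2 - (1/4) * (a - b)\<^sup>2"
proof -
  have c: "(a + b) / 2 \<in> I"
    using geod a b by (intro is_interval_midpoint) (auto simp: unit_speed_geodesic_def)
  obtain c' where c': "\<And>z. (dist z c')\<^sup>2
      \<le> (1/2) * (dist (\<gamma> a) z)\<^sup>2 + (1/2) * (dist (\<gamma> b) z)\<^sup>2 - (1/4) * (dist (\<gamma> a) (\<gamma> b))\<^sup>2"
    using had unfolding hadamard_space_def by blast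
  have halves: "\<bar>a - (a + b) / 2\<bar> = \<bar>a - b\<bar> / 2" "\<bar>b - (a + b) / 2\<bar> = \<bar>a - b\<bar> / 2"
    by (simp_all add: abs_if field_simps)
  have dab: "dist (\<gamma> a) (\<gamma> b) = \<bar>a - b\<bar>"
    and dac: "dist (\<gamma> a) (\<gamma> ((a + b) / 2)) = \<bar>a - b\<bar> / 2"
    and dbc: "dist (\<gamma> b) (\<gamma> ((a + b) / 2)) = \<bar>a - b\<bar> / 2"
    using unit_speed_geodesicD[OF geod] a b c halves by auto
  \<comment> \<open>at the geodesic midpoint the right-hand side vanishes, so it is the point \<open>c'\<close>\<close>
  have "(dist (\<gamma> ((a + b) / 2)) c')\<^sup>2 \<le> 0"
    using c'[of "\<gamma> ((a + b) / 2)"] unfolding dab dac dbc by (simp add: power2_eq_square field_simps)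
  hence "\<gamma> ((a + b) / 2) = c'"
    by simp
  thus ?thesis
    using c'[of x] dab by (simp add: power2_abs)
qed

lemma hadamard_dist_geodesic_projection_ge_approx:
  fixes \<gamma> :: "real \<Rightarrow> 'a::metric_space"
  assumes had: "hadamard_space (UNIV :: 'a set)" and geod: "unit_speed_geodesic I \<gamma>"
    and s: "s \<in> I" and min: "\<forall>u\<in>I. dist q (\<gamma> s) \<le> dist q (\<gamma> u)"
  shows "\<forall>u\<in>I. (dist q (\<gamma> s))\<^sup>2 + (1 - (1/2)^k) * (u - s)\<^sup>2 \<le> (dist q (\<gamma> u))\<^sup>2"
proof (induction k)
  case 0
  show ?case
    using min by (simp add: power_mono)
next
  case (Suc k)
  show ?case
  proof
    fix u assume u: "u \<in> I"
    have "(s + u) / 2 \<in> I"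
      using geod s u by (intro is_interval_midpoint) (auto simp: unit_speed_geodesic_def)
    moreover have "((s + u) / 2 - s)\<^sup>2 = (u - s)\<^sup>2 / 4"
      by (simp add: power2_eq_square field_simps)
    ultimately have "(dist q (\<gamma> s))\<^sup>2 + (1 - (1/2)^k) * ((u - s)\<^sup>2 / 4) \<le> (dist q (\<gamma> ((s + u) / 2)))\<^sup>2"
      using Suc.IH by (metis (no_types, lifting))
    moreover have "(dist q (\<gamma> ((s + u) / 2)))\<^sup>2
        \<le> (1/2) * (dist q (\<gamma> s))\<^sup>2 + (1/2) * (dist q (\<gamma> u))\<^sup>2 - (1/4) * (u - s)\<^sup>2"
      using hadamard_dist_geodesic_midpoint_le[OF had geod s u, of q]
      by (simp add: dist_commute power2_commute)
    moreover have "(1 - (1/2::real)^k) * ((u - s)\<^sup>2 / 4) = (u - s)\<^sup>2 / 4 - (1/2)^k * (u - s)\<^sup>2 / 4"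
      and "(1 - (1/2::real)^Suc k) * (u - s)\<^sup>2 = (u - s)\<^sup>2 - (1/2)^k * (u - s)\<^sup>2 / 2"
      by (simp_all add: field_simps)
    ultimately show "(dist q (\<gamma> s))\<^sup>2 + (1 - (1/2)^Suc k) * (u - s)\<^sup>2 \<le> (dist q (\<gamma> u))\<^sup>2"
      by linarith
  qed
qed

lemma hadamard_dist_geodesic_projection_ge:
  fixes \<gamma> :: "real \<Rightarrow> 'a::metric_space"
  assumes had: "hadamard_space (UNIV :: 'a set)" and geod: "unit_speed_geodesic I \<gamma>"
    and s: "s \<in> I" and min: "\<forall>u\<in>I. dist q (\<gamma> s) \<le> dist q (\<gamma> u)" and u: "u \<in> I"
  shows "(dist q (\<gamma> s))\<^sup>2 + (u - s)\<^sup>2 \<le> (dist q (\<gamma> u))\<^sup>2"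
proof (rule ccontr)
  define gap where "gap = (dist q (\<gamma> s))\<^sup>2 + (u - s)\<^sup>2 - (dist q (\<gamma> u))\<^sup>2"
  assume "\<not> ?thesis"
  hence "gap > 0"
    unfolding gap_def by simp
  have approx: "(dist q (\<gamma> s))\<^sup>2 + (1 - (1/2)^k) * (u - s)\<^sup>2 \<le> (dist q (\<gamma> u))\<^sup>2" for k
    using hadamard_dist_geodesic_projection_ge_approx[OF had geod s min] u by blast
  have "(dist q (\<gamma> s))\<^sup>2 \<le> (dist q (\<gamma> u))\<^sup>2"
    using approx[of 0] by simp
  hence "(u - s)\<^sup>2 > 0"
    using \<open>gap > 0\<close> unfolding gap_def by linarith
  then obtain k where "(1/2::real)^k < gap / (u - s)\<^sup>2"
    using real_arch_pow_inv[of "gap / (u - s)\<^sup>2" "1/2"] \<open>gap > 0\<close> by auto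
  hence "(1/2::real)^k * (u - s)\<^sup>2 < gap"
    using \<open>(u - s)\<^sup>2 > 0\<close> by (simp add: field_simps)
  thus False
    using approx[of k] unfolding gap_def by (simp add: algebra_simps)
qed

lemma unit_speed_geodesic_projection_exists:
  fixes \<gamma> :: "real \<Rightarrow> 'a::metric_space"
  assumes geod: "unit_speed_geodesic I \<gamma>" and "closed I" and a: "a \<in> I"
  shows "\<exists>s\<in>I. \<forall>u\<in>I. dist q (\<gamma> s) \<le> dist q (\<gamma> u)"
proof -
  \<comment> \<open>points of \<open>\<gamma>\<close> farther than \<open>r\<close> from \<open>\<gamma> a\<close> are farther from q than \<open>\<gamma> a\<close>\<close>
  define r where "r = 2 * dist q (\<gamma> a)"
  define K where "K = I \<inter> {a - r..a + r}"
  have "compact K"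
    unfolding K_def using \<open>closed I\<close> by (simp add: closed_Int_compact)
  moreover have "a \<in> K"
    using a unfolding K_def r_def by auto
  moreover have "continuous_on K (\<lambda>t. dist q (\<gamma> t))"
    using continuous_on_subset[OF unit_speed_geodesic_continuous_on[OF geod]]
    unfolding K_def by (intro continuous_intros) auto
  ultimately obtain s where s: "s \<in> K" "\<forall>t\<in>K. dist q (\<gamma> s) \<le> dist q (\<gamma> t)"
    using continuous_attains_inf[of K "\<lambda>t. dist q (\<gamma> t)"] by blast
  have "dist q (\<gamma> s) \<le> dist q (\<gamma> u)" if u: "u \<in> I" for u
  proof (cases "u \<in> K")
    case False
    hence "\<bar>u - a\<bar> > r"
      using u unfolding K_def by auto
    moreover have "\<bar>u - a\<bar> \<le> dist q (\<gamma> u) + dist q (\<gamma> a)"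
      using unit_speed_geodesicD[OF geod u a] dist_triangle[of "\<gamma> u" "\<gamma> a" q]
      by (simp add: dist_commute)
    moreover have "dist q (\<gamma> s) \<le> dist q (\<gamma> a)"
      using s \<open>a \<in> K\<close> by blast
    ultimately show ?thesis
      unfolding r_def by linarith
  qed (use s in blast)
  moreover have "s \<in> I"
    using s unfolding K_def by blast
  ultimately show ?thesis
    by blast
qed

lemma hadamard_geodesic_projection_unique:
  fixes \<gamma> :: "real \<Rightarrow> 'a::metric_space"
  assumes had: "hadamard_space (UNIV :: 'a set)" and geod: "unit_speed_geodesic I \<gamma>"
    and s1: "s1 \<in> I" "\<forall>u\<in>I. dist q (\<gamma> s1) \<le> dist q (\<gamma> u)"
    and s2: "s2 \<in> I" "\<forall>u\<in>I. dist q (\<gamma> s2) \<le> dist q (\<gamma> u)"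
  shows "s1 = s2"
proof -
  have "(dist q (\<gamma> s1))\<^sup>2 + (s2 - s1)\<^sup>2 \<le> (dist q (\<gamma> s2))\<^sup>2"
    using hadamard_dist_geodesic_projection_ge[OF had geod s1 s2(1)] .
  moreover have "(dist q (\<gamma> s2))\<^sup>2 \<le> (dist q (\<gamma> s1))\<^sup>2"
    using s1(1) s2(2) by (intro power_mono) auto
  ultimately have "(s2 - s1)\<^sup>2 \<le> 0"
    by linarith
  thus ?thesis
    by simp
qed

lemma hadamard_geodesic_projection_ex1:
  fixes \<gamma> :: "real \<Rightarrow> 'a::metric_space"
  assumes had: "hadamard_space (UNIV :: 'a set)" and geod: "unit_speed_geodesic I \<gamma>"
    and "closed I" and "a \<in> I"
  shows "\<exists>!p. p \<in> \<gamma> ` I \<and> (\<forall>z\<in>\<gamma> ` I. dist q p \<le> dist q z)"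
proof -
  obtain s where s: "s \<in> I" "\<forall>u\<in>I. dist q (\<gamma> s) \<le> dist q (\<gamma> u)"
    using unit_speed_geodesic_projection_exists[OF geod \<open>closed I\<close> \<open>a \<in> I\<close>] by blast
  have "s' = s" if "s' \<in> I" "\<forall>z\<in>\<gamma> ` I. dist q (\<gamma> s') \<le> dist q z" for s'
    using hadamard_geodesic_projection_unique[OF had geod _ _ s] that by blast
  thus ?thesis
    using s by (intro ex1I[of _ "\<gamma> s"]) blast+
qed

lemma hadamard_geodesic_projection_pointwise_bound:
  fixes \<gamma> :: "real \<Rightarrow> 'a::metric_space"
  assumes had: "hadamard_space (UNIV :: 'a set)" and geod: "unit_speed_geodesic I \<gamma>"
    and "0 \<in> I" and s: "s \<in> I" "0 \<le> s" and min: "\<forall>u\<in>I. dist q (\<gamma> s) \<le> dist q (\<gamma> u)"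
    and t: "t \<in> I"
  shows "dist q (\<gamma> 0) * of_bool (t = 0) + dist (\<gamma> s) (\<gamma> 0) * (of_bool (t < 0) - of_bool (0 < t))
      + (dist q (\<gamma> s) + dist (\<gamma> s) (\<gamma> 0) - dist (\<gamma> t) (\<gamma> 0))
        * indicator {0<..dist q (\<gamma> s) + dist (\<gamma> s) (\<gamma> 0)} t
    \<le> dist (\<gamma> t) q - dist (\<gamma> t) (\<gamma> 0)"
proof -
  have dist_s: "dist (\<gamma> s) (\<gamma> 0) = s" and dist_t: "dist (\<gamma> t) (\<gamma> 0) = \<bar>t\<bar>"
    using unit_speed_geodesicD[OF geod] \<open>0 \<in> I\<close> s t by auto
  have near: "dist q (\<gamma> s) \<le> dist q (\<gamma> t)"
    using min t by blast
  have "(t - s)\<^sup>2 \<le> (dist q (\<gamma> t))\<^sup>2"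
    using hadamard_dist_geodesic_projection_ge[OF had geod s(1) min t] zero_le_power2[of "dist q (\<gamma> s)"]
    by linarith
  hence far: "\<bar>t - s\<bar> \<le> dist q (\<gamma> t)"
    using power2_le_imp_le[of "\<bar>t - s\<bar>" "dist q (\<gamma> t)"] by (simp only: power2_abs zero_le_dist)
  consider "t < 0" | "t = 0" | "0 < t" "t \<le> dist q (\<gamma> s) + s" | "dist q (\<gamma> s) + s < t"
    by linarith
  thus ?thesis
  proof cases
    case 4
    hence "0 < t"
      using zero_le_dist[of q "\<gamma> s"] \<open>0 \<le> s\<close> by linarith
    thus ?thesis
      using 4 far by (simp add: indicator_def dist_s dist_t dist_commute[of "\<gamma> t" q])
  qed (use near far \<open>0 \<le> s\<close> in \<open>simp_all add: indicator_def dist_s dist_t dist_commute[of "\<gamma> _" q]\<close>)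
qed

lemma hadamard_geodesic_projection_AE_bound:
  fixes \<gamma> :: "real \<Rightarrow> 'a::metric_space" and Y :: "'b \<Rightarrow> 'a"
  assumes had: "hadamard_space (UNIV :: 'a set)" and geod: "unit_speed_geodesic I \<gamma>"
    and "0 \<in> I" and s: "s \<in> I" "0 \<le> s" and min: "\<forall>u\<in>I. dist q (\<gamma> s) \<le> dist q (\<gamma> u)"
    and Y_on: "AE \<omega> in M. Y \<omega> \<in> \<gamma> ` I"
  shows "AE \<omega> in M. dist q (\<gamma> 0) * of_bool (Y \<omega> = \<gamma> 0)
      + dist (\<gamma> s) (\<gamma> 0) * (of_bool (inv_into I \<gamma> (Y \<omega>) < 0) - of_bool (0 < inv_into I \<gamma> (Y \<omega>)))
      + (dist q (\<gamma> s) + dist (\<gamma> s) (\<gamma> 0) - dist (Y \<omega>) (\<gamma> 0))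
        * indicator {0<..dist q (\<gamma> s) + dist (\<gamma> s) (\<gamma> 0)} (inv_into I \<gamma> (Y \<omega>))
    \<le> dist (Y \<omega>) q - dist (Y \<omega>) (\<gamma> 0)"
  using Y_on
proof eventually_elim
  case (elim \<omega>)
  then obtain t where t: "t \<in> I" "Y \<omega> = \<gamma> t"
    by blast
  have "inv_into I \<gamma> (Y \<omega>) = t" and "\<gamma> t = \<gamma> 0 \<longleftrightarrow> t = 0"
    using t \<open>0 \<in> I\<close> unit_speed_geodesic_inj_on[OF geod] by (auto simp: inj_on_eq_iff)
  thus ?case
    using hadamard_geodesic_projection_pointwise_bound[OF had geod \<open>0 \<in> I\<close> s min t(1)] t(2) by simp
qed

lemma (in finite_measure) integrable_dist_diff:
  fixes Y :: "'a \<Rightarrow> 'b::metric_space"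
  assumes [measurable]: "Y \<in> borel_measurable M"
  shows "integrable M (\<lambda>\<omega>. dist (Y \<omega>) q - dist (Y \<omega>) m)"
proof (rule integrable_const_bound[where B = "dist q m"])
  show "AE \<omega> in M. norm (dist (Y \<omega>) q - dist (Y \<omega>) m) \<le> dist q m"
    using abs_dist_diff_le[of q "Y _" m] by (simp add: dist_commute[of "Y _" q])
qed measurable

lemma (in finite_measure) integrable_geodesic_excess_indicator:
  fixes \<gamma> :: "real \<Rightarrow> 'b::metric_space" and Y :: "'a \<Rightarrow> 'b"
  assumes geod: "unit_speed_geodesic I \<gamma>" and "closed I" and "0 \<in> I"
    and [measurable]: "Y \<in> borel_measurable M" and Y_on: "AE \<omega> in M. Y \<omega> \<in> \<gamma> ` I"
  shows "integrable M (\<lambda>\<omega>. (L - dist (Y \<omega>) (\<gamma> 0)) * indicator {0<..L} (inv_into I \<gamma> (Y \<omega>)))"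
proof (rule integrable_const_bound[where B = "\<bar>L\<bar>"])
  show "AE \<omega> in M. norm ((L - dist (Y \<omega>) (\<gamma> 0)) * indicator {0<..L} (inv_into I \<gamma> (Y \<omega>))) \<le> \<bar>L\<bar>"
    using Y_on
  proof eventually_elim
    case (elim \<omega>)
    then obtain t where t: "t \<in> I" "Y \<omega> = \<gamma> t"
      by blast
    hence "inv_into I \<gamma> (Y \<omega>) = t" and "dist (Y \<omega>) (\<gamma> 0) = \<bar>t\<bar>"
      using unit_speed_geodesic_inj_on[OF geod] unit_speed_geodesicD[OF geod _ \<open>0 \<in> I\<close>] by auto
    thus ?case
      by (auto simp: indicator_def)
  qed
  show "(\<lambda>\<omega>. (L - dist (Y \<omega>) (\<gamma> 0)) * indicator {0<..L} (inv_into I \<gamma> (Y \<omega>))) \<in> borel_measurable M"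
    using borel_measurable_inv_into_unit_speed_geodesic[OF geod \<open>closed I\<close>] by measurable
qed

lemma (in prob_space) expectation_ge_of_bool_combination:
  fixes f g :: "'a \<Rightarrow> real"
  assumes [measurable]: "Measurable.pred M P" "Measurable.pred M Q" "Measurable.pred M R"
    and integrable: "integrable M f" "integrable M g"
    and le: "AE x in M. a * of_bool (P x) + b * (of_bool (Q x) - of_bool (R x)) + g x \<le> f x"
  shows "a * prob {x\<in>space M. P x} + b * (prob {x\<in>space M. Q x} - prob {x\<in>space M. R x})
    + expectation g \<le> expectation f"
proof -
  have of_bool: "integrable M (\<lambda>x. of_bool (S x) :: real)" "expectation (\<lambda>x. of_bool (S x)) = prob {x\<in>space M. S x}"
    if [measurable]: "Measurable.pred M S" for S
  proof -
    have "indicator {x\<in>space M. S x} x = (of_bool (S x) :: real)" if "x \<in> space M" for x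
      using that by simp
    moreover have "integrable M (indicator {x\<in>space M. S x} :: 'a \<Rightarrow> real)"
      by (intro integrable_real_indicator) (simp_all add: less_top[symmetric])
    ultimately show "integrable M (\<lambda>x. of_bool (S x) :: real)"
      by (simp cong: Bochner_Integration.integrable_cong)
    have "expectation (\<lambda>x. of_bool (S x)) = expectation (indicator {x\<in>space M. S x})"
      using \<open>\<And>x. x \<in> space M \<Longrightarrow> _\<close> by (intro Bochner_Integration.integral_cong) simp_all
    also have "\<dots> = prob {x\<in>space M. S x}"
      by (simp add: Int_absorb2)
    finally show "expectation (\<lambda>x. of_bool (S x)) = prob {x\<in>space M. S x}" .
  qed
  have "a * prob {x\<in>space M. P x} + b * (prob {x\<in>space M. Q x} - prob {x\<in>space M. R x}) + expectation g
      = expectation (\<lambda>x. a * of_bool (P x) + b * (of_bool (Q x) - of_bool (R x)) + g x)"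
    using integrable(2) of_bool by simp
  also have "\<dots> \<le> expectation f"
    using integrable le of_bool by (intro integral_mono_AE) auto
  finally show ?thesis .
qed

theorem mainTheorem14:
  fixes M :: "'s measure" and Y :: "'s \<Rightarrow> 'a::metric_space"
    and o' m q :: 'a and \<gamma> :: "real \<Rightarrow> 'a" and I :: "real set"
  assumes hadamard: "hadamard_space (UNIV :: 'a set)"
    and prob: "prob_space M"
    and Y_rv: "Y \<in> borel_measurable M"
    and m_min: "\<forall>z. prob_space.expectation M (\<lambda>\<omega>. dist (Y \<omega>) m - dist (Y \<omega>) o')
                  \<le> prob_space.expectation M (\<lambda>\<omega>. dist (Y \<omega>) z - dist (Y \<omega>) o')"
    and geod: "unit_speed_geodesic I \<gamma>"
    and I_closed: "closed I"
    and zero_I: "0 \<in> I"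
    and gamma0: "\<gamma> 0 = m"
    and Y_on: "AE \<omega> in M. Y \<omega> \<in> \<gamma> ` I"
  shows "(\<exists>!p. p \<in> \<gamma> ` I \<and> (\<forall>z\<in>\<gamma> ` I. dist q p \<le> dist q z))
    \<and> (\<forall>p. p \<in> \<gamma> ` I \<and> (\<forall>z\<in>\<gamma> ` I. dist q p \<le> dist q z) \<and> inv_into I \<gamma> p \<ge> 0 \<longrightarrow>
        prob_space.expectation M (\<lambda>\<omega>. dist (Y \<omega>) q - dist (Y \<omega>) m)
        \<ge> dist q m * prob_space.prob M {\<omega>\<in>space M. Y \<omega> = m}
          + dist p m * (prob_space.prob M {\<omega>\<in>space M. inv_into I \<gamma> (Y \<omega>) < 0}
                        - prob_space.prob M {\<omega>\<in>space M. inv_into I \<gamma> (Y \<omega>) > 0})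
          + prob_space.expectation M (\<lambda>\<omega>.
              (dist q p + dist p m - dist (Y \<omega>) m)
              * indicator {0<..dist q p + dist p m} (inv_into I \<gamma> (Y \<omega>))))"
proof -
  interpret P: prob_space M
    by (rule prob)
  note [measurable] = Y_rv borel_measurable_inv_into_unit_speed_geodesic[OF geod I_closed]
  have "P.expectation (\<lambda>\<omega>. dist (Y \<omega>) q - dist (Y \<omega>) m)
        \<ge> dist q m * P.prob {\<omega>\<in>space M. Y \<omega> = m}
          + dist p m * (P.prob {\<omega>\<in>space M. inv_into I \<gamma> (Y \<omega>) < 0}
                        - P.prob {\<omega>\<in>space M. inv_into I \<gamma> (Y \<omega>) > 0})
          + P.expectation (\<lambda>\<omega>. (dist q p + dist p m - dist (Y \<omega>) m)
              * indicator {0<..dist q p + dist p m} (inv_into I \<gamma> (Y \<omega>)))"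
    if p: "p \<in> \<gamma> ` I" "\<forall>z\<in>\<gamma> ` I. dist q p \<le> dist q z" "inv_into I \<gamma> p \<ge> 0" for p
  proof -
    obtain s where s: "s \<in> I" "p = \<gamma> s"
      using p(1) by blast
    have "inv_into I \<gamma> p = s"
      using inv_into_f_f[OF unit_speed_geodesic_inj_on[OF geod] s(1)] s(2) by simp
    hence "0 \<le> s"
      using p(3) by simp
    have s_min: "\<forall>u\<in>I. dist q (\<gamma> s) \<le> dist q (\<gamma> u)"
      using p(2) unfolding s(2) by blast
    show ?thesis
      unfolding s(2) gamma0[symmetric]
      by (rule P.expectation_ge_of_bool_combination[OF _ _ _ P.integrable_dist_diff[OF Y_rv]
            P.integrable_geodesic_excess_indicator[OF geod I_closed zero_I Y_rv Y_on]
            hadamard_geodesic_projection_AE_bound[OF hadamard geod zero_I s(1) \<open>0 \<le> s\<close> s_min Y_on]])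
        measurable
  qed
  thus ?thesis
    by (intro conjI allI impI hadamard_geodesic_projection_ex1[OF hadamard geod I_closed zero_I])
      (elim conjE, assumption)
qed

end
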